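(* Let $S$ be a functional PTS specification and $\Gamma$ a context of $\lambda S$. For any $\Gamma$-term $M$ and any $\Gamma$-type $A$ of $\lambda S$: (1) $\varphi(|M|_\Gamma)\equiv_\beta M$; (2) $\psi(\|A\|_\Gamma)\equiv_\beta A$.
   Context: PTS: a specification $S=(\mathcal S,\mathcal A,\mathcal R)$ (sorts, axioms $(s_1:s_2)$, rules $(s_1,s_2,s_3)$), functional meaning $\mathcal A$ and $\mathcal R$ are functional relations; terms $s\mid x\mid M\,N\mid\lambda x:A.M\mid\Pi x:A.B$; $\lambda S$ has the standard PTS typing rules with conversion modulo $\equiv_\beta$. A $\Gamma$-term is $M$ with $\Gamma$ well formed and $\Gamma\vdash_{\lambda S}M:A$ for some $A$; a $\Gamma$-type is $A$ with $\Gamma$ well formed and $\Gamma\vdash A:s$ or $A=s$ for a sort $s$. The target syntax ($\lambda\Pi/S$) uses the constants $u_s,\varepsilon_s$ ($s\in\mathcal S$), $\dot s_1$ ($(s_1:s_2)\in\mathcal A$), $\dot\pi_{s_1s_2s_3}$ ($(s_1,s_2,s_3)\in\mathcal R$), with $u_s:\mathsf{Type}$, $\varepsilon_s:u_s\to\mathsf{Type}$, $\dot s_1:u_{s_2}$, $\dot\pi_{s_1s_2s_3}:\Pi\alpha:u_{s_1}.(\varepsilon_{s_1}\alpha\to u_{s_2})\to u_{s_3}$. Forward translation: $|s|_\Gamma=\dot s$, $|x|_\Gamma=x$, $|M\,N|_\Gamma=|M|_\Gamma|N|_\Gamma$, $|\lambda x:A.M|_\Gamma=\lambda x:\|A\|_\Gamma.|M|_{\Gamma,x:A}$,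 $|\Pi x:A.B|_\Gamma=\dot\pi_{s_1s_2s_3}|A|_\Gamma(\lambda x:\|A\|_\Gamma.|B|_{\Gamma,x:A})$ with $\Gamma\vdash A:s_1$, $\Gamma,x:A\vdash B:s_2$, $(s_1,s_2,s_3)\in\mathcal R$; $\|s\|_\Gamma=u_s$, $\|\Pi x:A.B\|_\Gamma=\Pi x:\|A\|_\Gamma.\|B\|_{\Gamma,x:A}$, otherwise $\|A\|_\Gamma=\varepsilon_s|A|_\Gamma$ where $\Gamma\vdash A:s$. Inverse translations (partial functions into terms of PTS syntax): $\varphi(\dot s)=s$, $\varphi(\dot\pi_{s_1s_2s_3})=\lambda\alpha:s_1.\lambda\beta:(\alpha\to s_2).\Pi x:\alpha.\beta\,x$, $\varphi(x)=x$, $\varphi(M\,N)=\varphi(M)\varphi(N)$, $\varphi(\lambda x:A.M)=\lambda x:\psi(A).\varphi(M)$; $\psi(u_s)=s$, $\psi(\varepsilon_s M)=\varphi(M)$, $\psi(\Pi x:A.B)=\Pi x:\psi(A).\psi(B)$. *)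

theory Defs
  imports Main
begin

datatype 's trm =
    Sort 's
  | Var nat
  | App "'s trm" "'s trm"
  | Lam "'s trm" "'s trm"   (* Lam A M  =  \<lambda>x:A. M, x bound in M *)
  | Pi  "'s trm" "'s trm"   (* Pi A B   =  \<Pi>x:A. B, x bound in B *)

primrec lift :: "'s trm \<Rightarrow> nat \<Rightarrow> 's trm" where
  "lift (Sort s) k = Sort s"
| "lift (Var i) k = (if i < k then Var i else Var (Suc i))"
| "lift (App M N) k = App (lift M k) (lift N k)"
| "lift (Lam A M) k = Lam (lift A k) (lift M (Suc k))"
| "lift (Pi A B) k = Pi (lift A k) (lift B (Suc k))"

primrec subst :: "'s trm \<Rightarrow> 's trm \<Rightarrow> nat \<Rightarrow> 's trm" where
  "subst (Sort s) N k = Sort s"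
| "subst (Var i) N k = (if k < i then Var (i - 1) else if i = k then N else Var i)"
| "subst (App M1 M2) N k = App (subst M1 N k) (subst M2 N k)"
| "subst (Lam A M) N k = Lam (subst A N k) (subst M (lift N 0) (Suc k))"
| "subst (Pi A B) N k = Pi (subst A N k) (subst B (lift N 0) (Suc k))"

inductive beta :: "'s trm \<Rightarrow> 's trm \<Rightarrow> bool" where
  beta_red: "beta (App (Lam A M) N) (subst M N 0)"
| appL: "beta M M' \<Longrightarrow> beta (App M N) (App M' N)"
| appR: "beta N N' \<Longrightarrow> beta (App M N) (App M N')"
| lamL: "beta A A' \<Longrightarrow> beta (Lam A M) (Lam A' M)"
| lamR: "beta M M' \<Longrightarrow> beta (Lam A M) (Lam A M')"
| piL: "beta A A' \<Longrightarrow> beta (Pi A B) (Pi A' B)"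
| piR: "beta B B' \<Longrightarrow> beta (Pi A B) (Pi A B')"

definition beta_eq :: "'s trm \<Rightarrow> 's trm \<Rightarrow> bool" where
  "beta_eq = equivclp beta"

definition functional_spec :: "('s \<times> 's) set \<Rightarrow> ('s \<times> 's \<times> 's) set \<Rightarrow> bool" where
  "functional_spec Ax Rl \<longleftrightarrow>
     (\<forall>s1 s2 s2'. (s1, s2) \<in> Ax \<longrightarrow> (s1, s2') \<in> Ax \<longrightarrow> s2 = s2') \<and>
     (\<forall>s1 s2 s3 s3'. (s1, s2, s3) \<in> Rl \<longrightarrow> (s1, s2, s3') \<in> Rl \<longrightarrow> s3 = s3')"

text \<open>Contexts: lists of types, the head is the type of Var 0.\<close>

inductive typing :: "('s \<times> 's) set \<Rightarrow> ('s \<times> 's \<times> 's) set \<Rightarrow>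
    's trm list \<Rightarrow> 's trm \<Rightarrow> 's trm \<Rightarrow> bool"
  for Ax :: "('s \<times> 's) set" and Rl :: "('s \<times> 's \<times> 's) set" where
  t_axiom: "(s1, s2) \<in> Ax \<Longrightarrow> typing Ax Rl [] (Sort s1) (Sort s2)"
| t_start: "typing Ax Rl G A (Sort s) \<Longrightarrow> typing Ax Rl (A # G) (Var 0) (lift A 0)"
| t_weak: "typing Ax Rl G M B \<Longrightarrow> typing Ax Rl G C (Sort s) \<Longrightarrow>
           typing Ax Rl (C # G) (lift M 0) (lift B 0)"
| t_prod: "typing Ax Rl G A (Sort s1) \<Longrightarrow> typing Ax Rl (A # G) B (Sort s2) \<Longrightarrow>
           (s1, s2, s3) \<in> Rl \<Longrightarrow> typing Ax Rl G (Pi A B) (Sort s3)"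
| t_app: "typing Ax Rl G M (Pi A B) \<Longrightarrow> typing Ax Rl G N A \<Longrightarrow>
          typing Ax Rl G (App M N) (subst B N 0)"
| t_abs: "typing Ax Rl (A # G) M B \<Longrightarrow> typing Ax Rl G (Pi A B) (Sort s) \<Longrightarrow>
          typing Ax Rl G (Lam A M) (Pi A B)"
| t_conv: "typing Ax Rl G M A \<Longrightarrow> typing Ax Rl G B (Sort s) \<Longrightarrow> beta_eq A B \<Longrightarrow>
           typing Ax Rl G M B"

inductive wf_ctx :: "('s \<times> 's) set \<Rightarrow> ('s \<times> 's \<times> 's) set \<Rightarrow> 's trm list \<Rightarrow> bool"
  for Ax Rl where
  wf_nil: "wf_ctx Ax Rl []"
| wf_cons: "wf_ctx Ax Rl G \<Longrightarrow> typing Ax Rl G A (Sort s) \<Longrightarrow> wf_ctx Ax Rl (A # G)"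

definition is_G_term :: "('s \<times> 's) set \<Rightarrow> ('s \<times> 's \<times> 's) set \<Rightarrow> 's trm list \<Rightarrow> 's trm \<Rightarrow> bool" where
  "is_G_term Ax Rl G M \<longleftrightarrow> wf_ctx Ax Rl G \<and> (\<exists>A. typing Ax Rl G M A)"

definition is_G_type :: "('s \<times> 's) set \<Rightarrow> ('s \<times> 's \<times> 's) set \<Rightarrow> 's trm list \<Rightarrow> 's trm \<Rightarrow> bool" where
  "is_G_type Ax Rl G A \<longleftrightarrow> wf_ctx Ax Rl G \<and> ((\<exists>s. typing Ax Rl G A (Sort s)) \<or> (\<exists>s. A = Sort s))"

datatype 's ltrm =
    LType
  | LKind
  | LVar nat
  | LApp "'s ltrm" "'s ltrm"
  | LLam "'s ltrm" "'s ltrm"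
  | LPi "'s ltrm" "'s ltrm"
  | U 's
  | Eps 's
  | Dot 's
  | DPi 's 's 's

text \<open>The sorts used in the translation are those determined by typing
  (unique for functional specifications); they are chosen with SOME.\<close>

function (sequential) tr :: "('s \<times> 's) set \<Rightarrow> ('s \<times> 's \<times> 's) set \<Rightarrow> 's trm list \<Rightarrow> 's trm \<Rightarrow> 's ltrm"
  and ttr :: "('s \<times> 's) set \<Rightarrow> ('s \<times> 's \<times> 's) set \<Rightarrow> 's trm list \<Rightarrow> 's trm \<Rightarrow> 's ltrm" where
  "tr Ax Rl G (Sort s) = Dot s"
| "tr Ax Rl G (Var x) = LVar x"
| "tr Ax Rl G (App M N) = LApp (tr Ax Rl G M) (tr Ax Rl G N)"
| "tr Ax Rl G (Lam A M) = LLam (ttr Ax Rl G A) (tr Ax Rl (A # G) M)"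
| "tr Ax Rl G (Pi A B) =
     (let s1 = (SOME s. typing Ax Rl G A (Sort s));
          s2 = (SOME s. typing Ax Rl (A # G) B (Sort s));
          s3 = (SOME s. (s1, s2, s) \<in> Rl)
      in LApp (LApp (DPi s1 s2 s3) (tr Ax Rl G A)) (LLam (ttr Ax Rl G A) (tr Ax Rl (A # G) B)))"
| "ttr Ax Rl G (Sort s) = U s"
| "ttr Ax Rl G (Pi A B) = LPi (ttr Ax Rl G A) (ttr Ax Rl (A # G) B)"
| "ttr Ax Rl G A = LApp (Eps (SOME s. typing Ax Rl G A (Sort s))) (tr Ax Rl G A)"
  by pat_completeness auto
termination
  by (relation "measure (\<lambda>x. case x of Inl (_, _, _, M) \<Rightarrow> 2 * size M
                                   | Inr (_, _, _, A) \<Rightarrow> 2 * size A + 1)") auto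

fun phi :: "'s ltrm \<Rightarrow> 's trm option" and psi :: "'s ltrm \<Rightarrow> 's trm option" where
  "phi (Dot s) = Some (Sort s)"
| "phi (DPi s1 s2 s3) =
     Some (Lam (Sort s1) (Lam (Pi (Var 0) (Sort s2)) (Pi (Var 1) (App (Var 1) (Var 0)))))"
| "phi (LVar x) = Some (Var x)"
| "phi (LApp M N) = (case (phi M, phi N) of (Some M', Some N') \<Rightarrow> Some (App M' N') | _ \<Rightarrow> None)"
| "phi (LLam A M) = (case (psi A, phi M) of (Some A', Some M') \<Rightarrow> Some (Lam A' M') | _ \<Rightarrow> None)"
| "phi _ = None"
| "psi (U s) = Some (Sort s)"
| "psi (LApp (Eps s) M) = phi M"
| "psi (LPi A B) = (case (psi A, psi B) of (Some A', Some B') \<Rightarrow> Some (Pi A' B') | _ \<Rightarrow> None)"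
| "psi _ = None"

end

theory Submission
  imports Defs
begin

text \<open>The inverse translations undo the forward ones up to the redexes introduced by
  \<open>phi\<close> of the product constant: \<open>phi |\<Pi>x:A. B|\<close> is
  \<open>(\<lambda>\<alpha>. \<lambda>\<beta>. \<Pi>x:\<alpha>. \<beta> x) (phi |A|) (\<lambda>x:psi \<parallel>A\<parallel>. phi |B|)\<close>, which reduces in three
  \<open>\<beta>\<close>-steps to \<open>\<Pi>x:phi |A|. phi |B|\<close>. Since \<open>\<beta>\<close>-conversion is a congruence, a structural
  induction on the term finishes the proof.\<close>

lemma subst_lift: "subst (lift M k) N k = M"
  by (induction M arbitrary: k N) auto

lemma subst_lift_Suc_Var: "subst (lift M (Suc k)) (Var k) k = M"
  by (induction M arbitrary: k) auto

lemma equivclp_compatible: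
  assumes "\<And>x y. r x y \<Longrightarrow> r (f x) (f y)"
    and "equivclp r a b"
  shows "equivclp r (f a) (f b)"
  using assms(2)
proof (induction rule: equivclp_induct)
  case base
  show ?case by simp
next
  case (step y z)
  then show ?case
    using assms(1) by (blast intro: equivclp_into_equivclp)
qed

lemma beta_eq_refl [simp]: "beta_eq M M"
  unfolding beta_eq_def by simp

lemma beta_eq_trans [trans]: "beta_eq L M \<Longrightarrow> beta_eq M N \<Longrightarrow> beta_eq L N"
  unfolding beta_eq_def by (rule equivclp_trans)

lemma beta_into_beta_eq: "beta M N \<Longrightarrow> beta_eq M N"
  unfolding beta_eq_def by (rule r_into_equivclp)

lemma beta_eq_App: "beta_eq M M' \<Longrightarrow> beta_eq N N' \<Longrightarrow> beta_eq (App M N) (App M' N')"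
  unfolding beta_eq_def
  by (rule equivclp_trans[OF equivclp_compatible[where f = "\<lambda>x. App x N"]
                             equivclp_compatible[where f = "App M'"]])
     (auto intro: beta.intros)

lemma beta_eq_Lam: "beta_eq A A' \<Longrightarrow> beta_eq M M' \<Longrightarrow> beta_eq (Lam A M) (Lam A' M')"
  unfolding beta_eq_def
  by (rule equivclp_trans[OF equivclp_compatible[where f = "\<lambda>x. Lam x M"]
                             equivclp_compatible[where f = "Lam A'"]])
     (auto intro: beta.intros)

lemma beta_eq_Pi: "beta_eq A A' \<Longrightarrow> beta_eq B B' \<Longrightarrow> beta_eq (Pi A B) (Pi A' B')"
  unfolding beta_eq_def
  by (rule equivclp_trans[OF equivclp_compatible[where f = "\<lambda>x. Pi x B"]
                             equivclp_compatible[where f = "Pi A'"]])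
     (auto intro: beta.intros)

lemma phi_DPi_App_beta_eq_Pi:
  assumes "phi (DPi s1 s2 s3) = Some P"
  shows "beta_eq (App (App P A) (Lam A' B)) (Pi A B)"
proof -
  have P: "P = Lam (Sort s1) (Lam (Pi (Var 0) (Sort s2)) (Pi (Var 1) (App (Var 1) (Var 0))))"
    using assms by simp
  have "beta (App P A) (Lam (Pi A (Sort s2)) (Pi (lift A 0) (App (Var 1) (Var 0))))"
    unfolding P
    using beta_red[of "Sort s1" "Lam (Pi (Var 0) (Sort s2)) (Pi (Var 1) (App (Var 1) (Var 0)))" A]
    by simp
  then have "beta_eq (App (App P A) (Lam A' B))
      (App (Lam (Pi A (Sort s2)) (Pi (lift A 0) (App (Var 1) (Var 0)))) (Lam A' B))"
    by (simp add: beta_eq_App beta_into_beta_eq)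
  also have "beta_eq \<dots> (Pi A (App (Lam (lift A' 0) (lift B 1)) (Var 0)))"
    using beta_red[of "Pi A (Sort s2)" "Pi (lift A 0) (App (Var 1) (Var 0))" "Lam A' B"]
    by (simp add: subst_lift beta_into_beta_eq)
  also have "beta_eq \<dots> (Pi A B)"
    using beta.piR[OF beta_red[of "lift A' 0" "lift B 1" "Var 0"]]
    by (simp add: subst_lift_Suc_Var[where k = 0, simplified] beta_into_beta_eq)
  finally show ?thesis .
qed

lemma phi_tr_psi_ttr_beta_eq:
  "(\<forall>G. \<exists>M'. phi (tr Ax Rl G M) = Some M' \<and> beta_eq M' M) \<and>
   (\<forall>G. \<exists>M'. psi (ttr Ax Rl G M) = Some M' \<and> beta_eq M' M)"
proof (induction M)
  case (Sort s)
  show ?case by simp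
next
  case (Var x)
  show ?case by simp
next
  case (App M N)
  have "\<exists>M'. phi (tr Ax Rl G (App M N)) = Some M' \<and> beta_eq M' (App M N)" for G
  proof -
    obtain M' N' where "phi (tr Ax Rl G M) = Some M'" "beta_eq M' M"
      and "phi (tr Ax Rl G N) = Some N'" "beta_eq N' N"
      using App by blast
    then show ?thesis by (simp add: beta_eq_App)
  qed
  then show ?case by simp
next
  case (Lam A M)
  have "\<exists>M'. phi (tr Ax Rl G (Lam A M)) = Some M' \<and> beta_eq M' (Lam A M)" for G
  proof -
    obtain A' M' where "psi (ttr Ax Rl G A) = Some A'" "beta_eq A' A"
      and "phi (tr Ax Rl (A # G) M) = Some M'" "beta_eq M' M"
      using Lam by blast
    then show ?thesis by (simp add: beta_eq_Lam)
  qed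
  then show ?case by simp
next
  case (Pi A B)
  have "\<exists>M'. phi (tr Ax Rl G (Pi A B)) = Some M' \<and> beta_eq M' (Pi A B)" for G
  proof -
    obtain A' where A': "phi (tr Ax Rl G A) = Some A'" "beta_eq A' A" using Pi by blast
    obtain A'' where A'': "psi (ttr Ax Rl G A) = Some A''" using Pi by blast
    obtain B' where B': "phi (tr Ax Rl (A # G) B) = Some B'" "beta_eq B' B" using Pi by blast
    obtain P s1 s2 s3 where DPi: "phi (DPi s1 s2 s3) = Some P"
      and tr_Pi: "tr Ax Rl G (Pi A B) = LApp (LApp (DPi s1 s2 s3) (tr Ax Rl G A))
                                          (LLam (ttr Ax Rl G A) (tr Ax Rl (A # G) B))"
      by (simp add: Let_def)
    have "phi (tr Ax Rl G (Pi A B)) = Some (App (App P A') (Lam A'' B'))"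
      using A' A'' B' DPi tr_Pi by simp
    moreover have "beta_eq (App (App P A') (Lam A'' B')) (Pi A B)"
      using beta_eq_trans[OF phi_DPi_App_beta_eq_Pi[OF DPi] beta_eq_Pi[OF A'(2) B'(2)]] .
    ultimately show ?thesis by blast
  qed
  moreover have "\<exists>M'. psi (ttr Ax Rl G (Pi A B)) = Some M' \<and> beta_eq M' (Pi A B)" for G
  proof -
    obtain A' B' where "psi (ttr Ax Rl G A) = Some A'" "beta_eq A' A"
      and "psi (ttr Ax Rl (A # G) B) = Some B'" "beta_eq B' B"
      using Pi by blast
    then show ?thesis by (simp add: beta_eq_Pi)
  qed
  ultimately show ?case by blast
qed

theorem lemma5p9:
  fixes Ax :: "('s \<times> 's) set" and Rl :: "('s \<times> 's \<times> 's) set" and G :: "'s trm list"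
  assumes "functional_spec Ax Rl"
    and "wf_ctx Ax Rl G"
  shows "(\<forall>M. is_G_term Ax Rl G M \<longrightarrow>
            (\<exists>M'. phi (tr Ax Rl G M) = Some M' \<and> beta_eq M' M))
       \<and> (\<forall>A. is_G_type Ax Rl G A \<longrightarrow>
            (\<exists>A'. psi (ttr Ax Rl G A) = Some A' \<and> beta_eq A' A))"
  using phi_tr_psi_ttr_beta_eq by blast

end
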